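(* Let $S$ be a semidomain that is not an integral domain. Then the polynomials $x+1$, $x^2+x+1$, $x^3+1$, and $x^4+x^2+1$ are irreducible in $S[x]$.
   Context: A semidomain is a subset $S$ of an integral domain $R$ containing $0$ and $1$ and closed under addition and multiplication; $S$ is an integral domain precisely when it is also closed under additive inverses. $S[x]$ is the semidomain of polynomials in $R[x]$ with coefficients in $S$. An element $a\in S[x]\setminus\{0\}$ is irreducible if it is not a unit of the multiplicative monoid $S[x]\setminus\{0\}$ and $a=bc$ with $b,c\in S[x]\setminus\{0\}$ forces $b$ or $c$ to be a unit. *)

theory Defs
  imports "HOL-Computational_Algebra.Polynomial"
begin

definition semidomain :: "'a::idom set \<Rightarrow> bool" where
  "semidomain S \<longleftrightarrow> 0 \<in> S \<and> 1 \<in> S \<and>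
     (\<forall>a\<in>S. \<forall>b\<in>S. a + b \<in> S) \<and> (\<forall>a\<in>S. \<forall>b\<in>S. a * b \<in> S)"

definition sub_integral_domain :: "'a::idom set \<Rightarrow> bool" where
  "sub_integral_domain S \<longleftrightarrow> semidomain S \<and> (\<forall>a\<in>S. - a \<in> S)"

definition spoly :: "'a::idom set \<Rightarrow> 'a poly set" where
  "spoly S = {p. \<forall>i. coeff p i \<in> S}"

definition spoly_unit :: "'a::idom set \<Rightarrow> 'a poly \<Rightarrow> bool" where
  "spoly_unit S p \<longleftrightarrow> p \<in> spoly S - {0} \<and> (\<exists>q \<in> spoly S - {0}. p * q = 1)"

definition spoly_irreducible :: "'a::idom set \<Rightarrow> 'a poly \<Rightarrow> bool" where
  "spoly_irreducible S a \<longleftrightarrow> a \<in> spoly S - {0} \<and> \<not> spoly_unit S a \<and>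
     (\<forall>b \<in> spoly S - {0}. \<forall>c \<in> spoly S - {0}. a = b * c \<longrightarrow> spoly_unit S b \<or> spoly_unit S c)"

end

theory Submission
  imports Defs
begin

text \<open>Since S is not closed under negation, -1 is not in S. A constant factor of a monic
  polynomial in S[x] is a unit, so it suffices to exclude factorizations into two non-constant
  factors; comparing coefficients, each such factorization of one of the four polynomials exhibits
  -1 as a product of elements of S.\<close>

lemma sub_integral_domain_if_neg_one_mem:
  assumes "semidomain S" and "-1 \<in> S"
  shows "sub_integral_domain S"
  using assms unfolding sub_integral_domain_def semidomain_def by (metis mult_minus1)

lemma semidomain_mult_mem: "semidomain S \<Longrightarrow> a \<in> S \<Longrightarrow> b \<in> S \<Longrightarrow> a * b \<in> S"
  by (simp add: semidomain_def)

lemma coeff_mem_if_spoly: "p \<in> spoly S \<Longrightarrow> coeff p i \<in> S"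
  by (simp add: spoly_def)

lemma zero_mem_spoly: "semidomain S \<Longrightarrow> 0 \<in> spoly S"
  by (simp add: spoly_def semidomain_def)

lemma pCons_mem_spoly: "a \<in> S \<Longrightarrow> p \<in> spoly S \<Longrightarrow> pCons a p \<in> spoly S"
  by (simp add: spoly_def coeff_pCons split: nat.split)

lemma coeff_mult_1: "coeff (p * q) 1 = coeff p 0 * coeff q 1 + coeff p 1 * coeff q 0"
  by (simp add: coeff_mult atMost_Suc algebra_simps)

lemma poly_eq_coeffs_if_degree_le_2:
  "degree (p :: 'a::zero poly) \<le> 2 \<Longrightarrow> p = [:coeff p 0, coeff p 1, coeff p 2:]"
  by (rule poly_eqI) (auto simp: coeff_pCons coeff_eq_0 numeral_2_eq_2 split: nat.split)

lemma degree_add_eq_if_mult_eq: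
  "(p :: 'a::idom poly) * q = r \<Longrightarrow> r \<noteq> 0 \<Longrightarrow> degree p + degree q = degree r"
  by (metis degree_mult_eq mult_eq_0_iff)

lemma cube_eq_neg_one_if_sum_and_product_one:
  fixes u v :: "'a::comm_ring_1"
  assumes "u * v = 1" and "u + v = 1"
  shows "u ^ 3 = -1"
proof -
  have "u ^ 2 - u + 1 = u ^ 2 - u * (u + v) + u * v"
    using assms by simp
  also have "\<dots> = 0"
    by (simp add: algebra_simps power2_eq_square)
  finally have "u ^ 2 - u + 1 = 0" .
  have "u ^ 3 + 1 = (u + 1) * (u ^ 2 - u + 1)"
    by (simp add: algebra_simps power2_eq_square power3_eq_cube)
  also have "\<dots> = 0"
    using \<open>u ^ 2 - u + 1 = 0\<close> by simp
  finally show ?thesis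
    by (simp add: eq_neg_iff_add_eq_0)
qed

lemma degree_eq_0_if_spoly_unit: "spoly_unit S p \<Longrightarrow> degree p = 0"
  unfolding spoly_unit_def by (metis DiffE degree_1 degree_mult_eq insertI1 add_is_0)

lemma spoly_unit_if_constant_factor_of_monic:
  assumes S: "semidomain S" and b: "b \<in> spoly S - {0}" and c: "c \<in> spoly S - {0}"
    and monic: "lead_coeff (b * c) = 1" and "degree b = 0"
  shows "spoly_unit S b"
proof -
  have b_const: "b = [:coeff b 0:]"
    using \<open>degree b = 0\<close> by (rule degree_0_id[symmetric])
  have inverse: "coeff b 0 * lead_coeff c = 1"
    using monic \<open>degree b = 0\<close> by (simp add: lead_coeff_mult)
  have "b * [:lead_coeff c:] = 1"
    using inverse by (subst b_const) (simp add: one_pCons mult.commute)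
  moreover have "[:lead_coeff c:] \<in> spoly S - {0}"
    using S c inverse by (auto simp: spoly_def semidomain_def coeff_pCons split: nat.splits)
  ultimately show ?thesis
    using b unfolding spoly_unit_def by blast
qed

lemma spoly_irreducible_monicI:
  assumes S: "semidomain S" and "p \<in> spoly S" and monic: "lead_coeff p = 1" and "degree p > 0"
    and no_proper_factors: "\<And>b c. b \<in> spoly S \<Longrightarrow> c \<in> spoly S \<Longrightarrow> b * c = p \<Longrightarrow>
      degree b > 0 \<Longrightarrow> degree c > 0 \<Longrightarrow> False"
  shows "spoly_irreducible S p"
proof -
  have "\<not> spoly_unit S p"
    using \<open>degree p > 0\<close> degree_eq_0_if_spoly_unit by fastforce
  moreover have "spoly_unit S b \<or> spoly_unit S c"
    if b: "b \<in> spoly S - {0}" and c: "c \<in> spoly S - {0}" and "p = b * c" for b c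
  proof (cases "degree b = 0 \<or> degree c = 0")
    case True
    then show ?thesis
      using spoly_unit_if_constant_factor_of_monic[OF S b c] spoly_unit_if_constant_factor_of_monic[OF S c b]
        monic \<open>p = b * c\<close> by (auto simp: mult.commute)
  next
    case False
    then show ?thesis
      using no_proper_factors[of b c] b c \<open>p = b * c\<close> by auto
  qed
  ultimately show ?thesis
    using \<open>p \<in> spoly S\<close> \<open>degree p > 0\<close> unfolding spoly_irreducible_def by auto
qed

lemma neg_one_mem_if_linear_factor:
  assumes S: "semidomain S" and "b \<in> spoly S" and "c \<in> spoly S" and "degree b = 1"
    and "coeff (b * c) 0 = 1" and "coeff (b * c) 1 = 0" and "lead_coeff (b * c) = 1"
  shows "-1 \<in> S"
proof -
  define b0 b1 c0 c1 where "b0 = coeff b 0" and "b1 = coeff b 1" and "c0 = coeff c 0" and "c1 = coeff c 1"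
  have "b0 * c0 = 1"
    using assms unfolding b0_def c0_def by (simp add: coeff_mult_0)
  moreover have "b0 * c1 = - (b1 * c0)"
    using assms coeff_mult_1[of b c] unfolding b0_def b1_def c0_def c1_def
    by (simp add: eq_neg_iff_add_eq_0)
  moreover have "b1 * lead_coeff c = 1"
    using assms unfolding b1_def by (simp add: lead_coeff_mult)
  ultimately have "(b0 * c1) * (lead_coeff c * b0) = -1"
    by (metis (no_types, lifting) minus_mult_left mult.assoc mult.left_commute mult_1_right)
  moreover have "(b0 * c1) * (lead_coeff c * b0) \<in> S"
    using assms unfolding b0_def c1_def
    by (simp add: semidomain_mult_mem coeff_mem_if_spoly)
  ultimately show ?thesis
    by simp
qed

lemma neg_one_mem_if_proper_factors_x2_x_1:
  assumes S: "semidomain S" and "b \<in> spoly S" and "c \<in> spoly S" and "b * c = [:1, 1, 1:]"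
    and "degree b > 0" and "degree c > 0"
  shows "-1 \<in> S"
proof -
  have "degree b + degree c = 2"
    using degree_add_eq_if_mult_eq[OF \<open>b * c = [:1, 1, 1:]\<close>] by simp
  then have "degree b = 1" and "degree c = 1"
    using assms by auto
  define u v where "u = coeff b 0 * coeff c 1" and "v = coeff b 1 * coeff c 0"
  have "u * v = (coeff b 0 * coeff c 0) * (coeff b 1 * coeff c 1)"
    unfolding u_def v_def by (simp add: ac_simps)
  also have "\<dots> = 1"
    using arg_cong[OF \<open>b * c = [:1, 1, 1:]\<close>, of "\<lambda>p. coeff p 0"]
      arg_cong[OF \<open>b * c = [:1, 1, 1:]\<close>, of lead_coeff] \<open>degree b = 1\<close> \<open>degree c = 1\<close>
    by (simp add: coeff_mult_0 lead_coeff_mult)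
  finally have "u * v = 1" .
  moreover have "u + v = 1"
    using coeff_mult_1[of b c] \<open>b * c = [:1, 1, 1:]\<close> unfolding u_def v_def by simp
  ultimately have "u ^ 3 = -1"
    by (rule cube_eq_neg_one_if_sum_and_product_one)
  moreover have "u ^ 3 \<in> S"
    using assms unfolding u_def power3_eq_cube
    by (simp add: semidomain_mult_mem coeff_mem_if_spoly)
  ultimately show ?thesis
    by simp
qed

lemma neg_one_mem_if_proper_factors_x3_1:
  assumes S: "semidomain S" and "b \<in> spoly S" and "c \<in> spoly S" and "b * c = [:1, 0, 0, 1:]"
    and "degree b > 0" and "degree c > 0"
  shows "-1 \<in> S"
proof -
  have "degree b + degree c = 3"
    using degree_add_eq_if_mult_eq[OF \<open>b * c = [:1, 0, 0, 1:]\<close>] by simp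
  then consider "degree b = 1" | "degree c = 1"
    using assms by linarith
  then show ?thesis
    by cases (use assms neg_one_mem_if_linear_factor[of S b c] neg_one_mem_if_linear_factor[of S c b]
        in \<open>simp_all add: mult.commute\<close>)
qed

lemma neg_one_mem_if_quadratic_factors_x4_x2_1:
  fixes b0 b1 b2 c0 c1 c2 :: "'a::idom"
  assumes S: "semidomain S" and mem: "b0 \<in> S" "b1 \<in> S" "b2 \<in> S" "c0 \<in> S" "c1 \<in> S" "c2 \<in> S"
    and "[:b0, b1, b2:] * [:c0, c1, c2:] = [:1, 0, 1, 0, 1:]"
  shows "-1 \<in> S"
proof -
  have e0: "b0 * c0 = 1" and e1: "b0 * c1 + b1 * c0 = 0" and e2: "b0 * c2 + b1 * c1 + b2 * c0 = 1"
    and e3: "b1 * c2 + b2 * c1 = 0" and e4: "b2 * c2 = 1"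
    using assms(8) by (simp_all add: algebra_simps)
  show ?thesis
  proof (cases "c1 = 0")
    case True
    then have "b1 = 0"
      using e0 e1 by auto
    have "(b0 * c2) * (b2 * c0) = (b0 * c0) * (b2 * c2)"
      by (simp add: ac_simps)
    then have "(b0 * c2) ^ 3 = -1"
      using e0 e2 e4 \<open>b1 = 0\<close> by (intro cube_eq_neg_one_if_sum_and_product_one) simp_all
    moreover have "(b0 * c2) ^ 3 \<in> S"
      using S mem by (simp add: power3_eq_cube semidomain_mult_mem)
    ultimately show ?thesis
      by simp
  next
    case False
    have "b0 * b0 * c1 + b1 * (b0 * c0) = 0"
      using arg_cong[OF e1, of "(*) b0"] by (simp add: algebra_simps)
    moreover have "b2 * b2 * c1 + b1 * (b2 * c2) = 0"
      using arg_cong[OF e3, of "(*) b2"] by (simp add: algebra_simps)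
    ultimately have "b1 = - (b0 * b0 * c1)" and "b1 = - (b2 * b2 * c1)"
      using e0 e4 by (simp_all add: add.commute eq_neg_iff_add_eq_0)
    then have "(b0 - b2) * (b0 + b2) = 0"
      using False by (simp add: algebra_simps)
    then consider "b0 = b2" | "b0 = - b2"
      by (auto simp: eq_neg_iff_add_eq_0)
    then show ?thesis
    proof cases
      case 1
      then have "c0 = c2"
        using e0 e4 by (metis mult_cancel_left mult_zero_left zero_neq_one)
      then have "b1 * c1 = -1"
        using e0 e2 \<open>b0 = b2\<close> by (simp add: algebra_simps eq_neg_iff_add_eq_0)
      then show ?thesis
        using semidomain_mult_mem[OF S mem(2,5)] by simp
    next
      case 2
      then have "b0 * c2 = -1"
        using e4 by simp
      then show ?thesis
        using semidomain_mult_mem[OF S mem(1,6)] by simp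
    qed
  qed
qed

lemma neg_one_mem_if_proper_factors_x4_x2_1:
  assumes S: "semidomain S" and "b \<in> spoly S" and "c \<in> spoly S" and "b * c = [:1, 0, 1, 0, 1:]"
    and "degree b > 0" and "degree c > 0"
  shows "-1 \<in> S"
proof -
  have "degree b + degree c = 4"
    using degree_add_eq_if_mult_eq[OF \<open>b * c = [:1, 0, 1, 0, 1:]\<close>] by simp
  then consider "degree b = 1" | "degree c = 1" | "degree b = 2" and "degree c = 2"
    using assms by linarith
  then show ?thesis
  proof cases
    case 3
    then have "[:coeff b 0, coeff b 1, coeff b 2:] * [:coeff c 0, coeff c 1, coeff c 2:] = [:1, 0, 1, 0, 1:]"
      using poly_eq_coeffs_if_degree_le_2[of b] poly_eq_coeffs_if_degree_le_2[of c]
        \<open>b * c = [:1, 0, 1, 0, 1:]\<close> by simp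
    then show ?thesis
      using assms by (intro neg_one_mem_if_quadratic_factors_x4_x2_1) (simp_all add: coeff_mem_if_spoly)
  qed (use assms neg_one_mem_if_linear_factor[of S b c] neg_one_mem_if_linear_factor[of S c b]
      in \<open>simp_all add: mult.commute\<close>)
qed

theorem lemma5p2:
  fixes S :: "'a::idom set"
  assumes "semidomain S" and "\<not> sub_integral_domain S"
  shows "spoly_irreducible S [:1, 1:] \<and>
         spoly_irreducible S [:1, 1, 1:] \<and>
         spoly_irreducible S [:1, 0, 0, 1:] \<and>
         spoly_irreducible S [:1, 0, 1, 0, 1:]"
proof -
  have "-1 \<notin> S"
    using assms sub_integral_domain_if_neg_one_mem by blast
  have "0 \<in> S" and "1 \<in> S"
    using \<open>semidomain S\<close> by (simp_all add: semidomain_def)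
  note irreducibleI = spoly_irreducible_monicI[OF \<open>semidomain S\<close>]
  note memI = pCons_mem_spoly zero_mem_spoly[OF \<open>semidomain S\<close>] \<open>0 \<in> S\<close> \<open>1 \<in> S\<close>
  have "spoly_irreducible S [:1, 1:]"
    by (rule irreducibleI) (auto simp: memI dest: degree_add_eq_if_mult_eq)
  moreover have "spoly_irreducible S [:1, 1, 1:]"
    by (rule irreducibleI) (use neg_one_mem_if_proper_factors_x2_x_1 \<open>semidomain S\<close> \<open>-1 \<notin> S\<close> in \<open>auto simp: memI\<close>)
  moreover have "spoly_irreducible S [:1, 0, 0, 1:]"
    by (rule irreducibleI) (use neg_one_mem_if_proper_factors_x3_1 \<open>semidomain S\<close> \<open>-1 \<notin> S\<close> in \<open>auto simp: memI\<close>)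
  moreover have "spoly_irreducible S [:1, 0, 1, 0, 1:]"
    by (rule irreducibleI) (use neg_one_mem_if_proper_factors_x4_x2_1 \<open>semidomain S\<close> \<open>-1 \<notin> S\<close> in \<open>auto simp: memI\<close>)
  ultimately show ?thesis
    by blast
qed

end
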